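(* Let $\phi\ge1$. Consider an instance of the knapsack problem with arbitrary profits $p_1,\ldots,p_n\in\mathbb{R}_{\ge0}$ (and arbitrary capacity) in which every weight $w_i$ is chosen uniformly at random from an arbitrary interval $A_i\subseteq[0,1]$ of length $1/\phi$, independently of the other weights. Then the expected running time of the Nemhauser–Ullmann algorithm is $O(n^3\phi)$.
   Context: The Nemhauser–Ullmann algorithm: set $\mathcal{P}_0=\{0^n\}$; for $i=1,\ldots,n$ set $\mathcal{Q}_i=\mathcal{P}_{i-1}\cup\mathcal{P}_{i-1}^{+i}$ (where $\mathcal{S}^{+i}$ is obtained from $\mathcal{S}$ by setting coordinate $i$ of every vector to $1$) and let $\mathcal{P}_i$ be the set of elements of $\mathcal{Q}_i$ not dominated by any other element of $\mathcal{Q}_i$ (one per profit–weight pair), where $y$ dominates $x$ if $p^{\mathsf T}y\ge p^{\mathsf T}x$, $w^{\mathsf T}y\le w^{\mathsf T}x$ with one inequality strict; finally return $\arg\max_{x\in\mathcal{P}_n}\{p^{\mathsf T}x\mid w^{\mathsf T}x\le W\}$. The running time refers to the implementation on a unit-cost RAM (constant-time arithmetic and comparisons on reals) whose running time is $\Theta(\sum_{i=0}^{n-1}|\mathcal{P}_i|)$, which keeps the profit–weight values of each $\mathcal{P}_i$ sorted by weight and removes dominated ones by a linear sweep. *)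

theory Defs
  imports "HOL-Probability.Probability"
begin

definition dominates :: "real \<times> real \<Rightarrow> real \<times> real \<Rightarrow> bool" where
  "dominates y x \<longleftrightarrow> fst y \<ge> fst x \<and> snd y \<le> snd x \<and> (fst y > fst x \<or> snd y < snd x)"

definition nondominated :: "(real \<times> real) set \<Rightarrow> (real \<times> real) set" where
  "nondominated Q = {x \<in> Q. \<not> (\<exists>y\<in>Q. dominates y x)}"

text \<open>The Nemhauser--Ullmann sets P_k, represented by their profit--weight pairs
  (one element per pair). Items are indexed 0..n-1; P_k uses the first k items.\<close>
fun nu_set :: "(nat \<Rightarrow> real) \<Rightarrow> (nat \<Rightarrow> real) \<Rightarrow> nat \<Rightarrow> (real \<times> real) set" where
  "nu_set p w 0 = {(0, 0)}"
| "nu_set p w (Suc k) =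
     nondominated (nu_set p w k \<union> (\<lambda>(q, v). (q + p k, v + w k)) ` nu_set p w k)"

text \<open>Running time of the Nemhauser--Ullmann algorithm (up to constant factors):
  sum of |P_k| for k = 0..n-1.\<close>
definition nu_time :: "nat \<Rightarrow> (nat \<Rightarrow> real) \<Rightarrow> (nat \<Rightarrow> real) \<Rightarrow> nat" where
  "nu_time n p w = (\<Sum>k<n. card (nu_set p w k))"

end

theory Submission
  imports Defs
begin

text \<open>
  The argument is Beier and Voecking's loser-gap analysis.  The set computed in round \<open>k\<close>
  is the Pareto set of the profit--weight pairs of all subsets of the first \<open>k\<close> items, and
  distinct Pareto points have distinct weights.  Cut \<open>[0, k]\<close> into cells of width \<open>1/m\<close>;
  once \<open>m\<close> is large, the Pareto points of positive weight lie in pairwise different cells.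
  If a cell \<open>(t, t + 1/m]\<close> contains a Pareto point, then for some item \<open>i\<close> the loser
  gap is at most \<open>1/m\<close>: the lightest solution containing \<open>i\<close> that beats the most
  profitable solution of weight at most \<open>t\<close> avoiding \<open>i\<close> has weight in
  \<open>(t, t + 1/m]\<close>.  With all other weights fixed, this weight is \<open>w\<^sub>i\<close> plus a constant,
  so the event has probability at most \<open>\<phi>/m\<close>.  Summing over the \<open>k m\<close> cells and \<open>k\<close>
  items and letting \<open>m \<rightarrow> \<infinity>\<close> (Fatou's lemma) bounds the expected size of the \<open>k\<close>-th
  Pareto set by \<open>1 + k\<^sup>2 \<phi>\<close>; summing over \<open>k < n\<close> gives \<open>O(n\<^sup>3 \<phi>)\<close>.
\<close>

lemma dominates_trans: "dominates x y \<Longrightarrow> dominates y z \<Longrightarrow> dominates x z"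
  by (auto simp: dominates_def)

lemma dominates_translate:
  "dominates ((\<lambda>(q, v). (q + a, v + b)) y) ((\<lambda>(q, v). (q + a, v + b)) x) \<longleftrightarrow> dominates y x"
  by (cases x; cases y) (auto simp: dominates_def)

lemma nondominated_subset: "nondominated Q \<subseteq> Q"
  by (auto simp: nondominated_def)

lemma finite_nondominated: "finite Q \<Longrightarrow> finite (nondominated Q)"
  using finite_subset[OF nondominated_subset] .

lemma inj_on_snd_nondominated: "inj_on snd (nondominated Q)"
proof (rule inj_onI)
  fix x y assume "x \<in> nondominated Q" "y \<in> nondominated Q" "snd x = snd y"
  then have "\<not> dominates x y" "\<not> dominates y x"
    by (auto simp: nondominated_def)
  with \<open>snd x = snd y\<close> show "x = y"
    by (auto simp: dominates_def prod_eq_iff)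
qed

lemma nondominated_dominates_or_eq:
  assumes "finite Q" "y \<in> Q"
  shows "\<exists>z\<in>nondominated Q. z = y \<or> dominates z y"
proof -
  let ?A = "{z \<in> Q. z = y \<or> dominates z y}"
  have "finite ?A" "y \<in> ?A" using assms by auto
  then obtain z where z: "is_arg_min (\<lambda>z. snd z - fst z) (\<lambda>z. z \<in> ?A) z"
    using ex_is_arg_min_if_finite[of ?A] by blast
  have "z \<in> nondominated Q"
  proof (unfold nondominated_def, safe)
    show "z \<in> Q" using z by (simp add: is_arg_min_def)
  next
    fix u assume "u \<in> Q" "dominates u z"
    moreover have "z = y \<or> dominates z y" using z by (simp add: is_arg_min_def)
    ultimately have "u \<in> ?A" using dominates_trans by blast
    moreover have "snd u - fst u < snd z - fst z"
      using \<open>dominates u z\<close> by (auto simp: dominates_def)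
    ultimately show False using z unfolding is_arg_min_def by blast
  qed
  then show ?thesis using z by (auto simp: is_arg_min_def)
qed

lemma nondominated_eqI:
  assumes "finite Q" "nondominated Q \<subseteq> A" "A \<subseteq> Q"
  shows "nondominated A = nondominated Q"
proof
  show "nondominated Q \<subseteq> nondominated A"
    using assms(2,3) by (auto simp: nondominated_def)
next
  have "\<not> dominates y x" if x: "x \<in> nondominated A" and "y \<in> Q" for x y
  proof
    assume "dominates y x"
    obtain z where "z \<in> nondominated Q" "z = y \<or> dominates z y"
      using nondominated_dominates_or_eq[OF assms(1) \<open>y \<in> Q\<close>] by blast
    then have "z \<in> A" "dominates z x"
      using assms(2) dominates_trans \<open>dominates y x\<close> by blast+
    with x show False by (auto simp: nondominated_def)
  qed
  then show "nondominated A \<subseteq> nondominated Q"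
    using assms(3) by (auto simp: nondominated_def)
qed

lemma nondominated_Un_translate:
  fixes a b :: real
  defines "f \<equiv> \<lambda>(q, v). (q + a, v + b)"
  shows "nondominated (Q \<union> f ` Q) \<subseteq> nondominated Q \<union> f ` nondominated Q"
proof
  fix x assume x: "x \<in> nondominated (Q \<union> f ` Q)"
  then consider "x \<in> Q" | u where "u \<in> Q" "x = f u"
    by (auto simp: nondominated_def)
  then show "x \<in> nondominated Q \<union> f ` nondominated Q"
  proof cases
    case 1
    then show ?thesis using x by (auto simp: nondominated_def)
  next
    case 2
    have "\<not> dominates y u" if "y \<in> Q" for y
      using x 2 that dominates_translate[of a b y u] by (auto simp: nondominated_def f_def)
    then have "u \<in> nondominated Q"
      using 2 by (auto simp: nondominated_def)
    then show ?thesis using 2 by blast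
  qed
qed

definition solution_values :: "(nat \<Rightarrow> real) \<Rightarrow> (nat \<Rightarrow> real) \<Rightarrow> nat set \<Rightarrow> (real \<times> real) set" where
  "solution_values p w N = (\<lambda>S. (sum p S, sum w S)) ` Pow N"

lemma finite_solution_values: "finite N \<Longrightarrow> finite (solution_values p w N)"
  by (simp add: solution_values_def)

lemma solution_values_insert:
  assumes "finite N" "k \<notin> N"
  shows "solution_values p w (insert k N) =
    solution_values p w N \<union> (\<lambda>(q, v). (q + p k, v + w k)) ` solution_values p w N"
proof -
  have "(sum p (insert k S), sum w (insert k S)) = (sum p S + p k, sum w S + w k)" if "S \<subseteq> N" for S
  proof -
    have "finite S" "k \<notin> S" using that assms finite_subset by auto
    then show ?thesis by (simp add: add.commute)
  qed
  then have "(\<lambda>S. (sum p S, sum w S)) ` insert k ` Pow N =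
      (\<lambda>(q, v). (q + p k, v + w k)) ` solution_values p w N"
    unfolding solution_values_def image_image by (intro image_cong) auto
  then show ?thesis
    by (simp add: solution_values_def Pow_insert image_Un)
qed

theorem nu_set_eq_nondominated: "nu_set p w k = nondominated (solution_values p w {..<k})"
proof (induction k)
  case 0
  then show ?case by (auto simp: solution_values_def nondominated_def dominates_def)
next
  case (Suc k)
  let ?V = "solution_values p w {..<k}" and ?f = "\<lambda>(q, v). (q + p k, v + w k)"
  have "nondominated (nondominated ?V \<union> ?f ` nondominated ?V) = nondominated (?V \<union> ?f ` ?V)"
    using nondominated_Un_translate[where a = "p k" and b = "w k" and Q = ?V] nondominated_subset[of ?V]
    by (intro nondominated_eqI) (auto simp: finite_solution_values)
  then show ?case
    using Suc by (simp add: lessThan_Suc solution_values_insert)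
qed

lemma ex_is_arg_max_if_finite:
  fixes f :: "'a \<Rightarrow> 'b :: order"
  shows "finite S \<Longrightarrow> S \<noteq> {} \<Longrightarrow> \<exists>x. is_arg_max f (\<lambda>x. x \<in> S) x"
  using finite_has_maximal[of "f ` S"] by (fastforce simp: is_arg_max_def)

lemma is_arg_max_eq_value:
  fixes f :: "'a \<Rightarrow> 'b :: linorder"
  shows "is_arg_max f P x \<Longrightarrow> is_arg_max f P y \<Longrightarrow> f x = f y"
  by (meson antisym is_arg_max_linorder)

lemma is_arg_min_eq_value:
  fixes f :: "'a \<Rightarrow> 'b :: linorder"
  shows "is_arg_min f P x \<Longrightarrow> is_arg_min f P y \<Longrightarrow> f x = f y"
  by (meson antisym is_arg_min_linorder)

text \<open>\<open>T\<close> is the winner, a most profitable subset of \<open>I\<close> of weight at most \<open>t\<close>;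
  \<open>insert i S\<close> is the loser, a lightest solution containing \<open>i\<close> (with the rest taken from
  \<open>I\<close>) that is more profitable than the winner.\<close>
definition loser_gap_event ::
    "(nat \<Rightarrow> real) \<Rightarrow> nat set \<Rightarrow> nat \<Rightarrow> real \<Rightarrow> real \<Rightarrow> (nat \<Rightarrow> real) \<Rightarrow> bool" where
  "loser_gap_event p I i t e w \<longleftrightarrow> (\<exists>T S.
     is_arg_max (sum p) (\<lambda>U. U \<subseteq> I \<and> sum w U \<le> t) T \<and>
     is_arg_min (sum w) (\<lambda>U. U \<subseteq> I \<and> sum p T - p i < sum p U) S \<and>
     t < sum w S + w i \<and> sum w S + w i \<le> t + e)"

lemma solution_values_weight_bounds:
  assumes "finite N" "\<forall>i\<in>N. 0 \<le> w i \<and> w i \<le> 1" "v \<in> solution_values p w N"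
  shows "0 \<le> snd v \<and> snd v \<le> real (card N)"
proof -
  obtain S where S: "S \<subseteq> N" "v = (sum p S, sum w S)"
    using assms(3) by (auto simp: solution_values_def)
  have "sum w S \<le> sum w N"
    using S(1) assms(1,2) by (intro sum_mono2) auto
  also have "\<dots> \<le> real (card N)"
    using assms(2) sum_mono[of N w "\<lambda>_. 1"] by simp
  finally show ?thesis
    using S assms(2) by (auto intro: sum_nonneg)
qed

lemma loser_gap_event_if_nondominated:
  assumes N: "finite N" and p: "\<forall>i\<in>N. 0 \<le> p i"
    and y: "y \<in> nondominated (solution_values p w N)"
    and t: "0 \<le> t" "t < snd y" "snd y \<le> t + e"
  shows "\<exists>i\<in>N. loser_gap_event p (N - {i}) i t e w"
proof -
  obtain Y where Y: "Y \<subseteq> N" "y = (sum p Y, sum w Y)"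
    using y by (auto simp: nondominated_def solution_values_def)
  let ?winner = "\<lambda>U. U \<subseteq> N \<and> sum w U \<le> t"
  have "finite (Collect ?winner)" "Collect ?winner \<noteq> {}"
    using N t(1) by (auto intro!: exI[of _ "{}"])
  then obtain T where T: "is_arg_max (sum p) ?winner T"
    using ex_is_arg_max_if_finite[of "Collect ?winner" "sum p"] by auto
  have "T \<subseteq> N" "sum w T \<le> t"
    using T by (auto simp: is_arg_max_def)
  have "\<not> dominates (sum p T, sum w T) y"
    using y \<open>T \<subseteq> N\<close> by (auto simp: nondominated_def solution_values_def)
  then have T_less_Y: "sum p T < sum p Y"
    using \<open>sum w T \<le> t\<close> t Y by (auto simp: dominates_def)
  have "\<not> Y \<subseteq> T"
  proof
    assume "Y \<subseteq> T"
    then have "sum p Y \<le> sum p T"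
      using \<open>T \<subseteq> N\<close> N p by (intro sum_mono2) (auto intro: finite_subset)
    then show False using T_less_Y by simp
  qed
  then obtain i where i: "i \<in> Y" "i \<notin> T" by blast
  have "finite Y" using Y(1) N finite_subset by blast
  then have Y_split: "sum p Y = sum p (Y - {i}) + p i" "sum w Y = sum w (Y - {i}) + w i"
    using i(1) by (simp_all add: sum.remove)
  let ?loser = "\<lambda>U. U \<subseteq> N - {i} \<and> sum p T - p i < sum p U"
  have "finite (Collect ?loser)" "Y - {i} \<in> Collect ?loser"
    using N Y T_less_Y Y_split by auto
  then obtain S where S: "is_arg_min (sum w) ?loser S"
    using ex_is_arg_min_if_finite[of "Collect ?loser" "sum w"] by auto
  have "S \<subseteq> N - {i}" "sum p T < sum p S + p i"
    using S by (auto simp: is_arg_min_def)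
  have "sum w S \<le> sum w (Y - {i})"
    using S \<open>Y - {i} \<in> Collect ?loser\<close> by (auto simp: is_arg_min_linorder)
  have "t < sum w S + w i"
  proof (rule ccontr)
    assume "\<not> t < sum w S + w i"
    moreover have "finite S" "i \<notin> S" using \<open>S \<subseteq> N - {i}\<close> N finite_subset by auto
    ultimately have "insert i S \<subseteq> N" "sum w (insert i S) \<le> t"
      using \<open>S \<subseteq> N - {i}\<close> i Y by auto
    then have "sum p (insert i S) \<le> sum p T"
      using T by (auto simp: is_arg_max_linorder)
    with \<open>finite S\<close> \<open>i \<notin> S\<close> \<open>sum p T < sum p S + p i\<close> show False by simp
  qed
  moreover have "sum w S + w i \<le> t + e"
    using \<open>sum w S \<le> sum w (Y - {i})\<close> Y_split Y t(3) by simp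
  moreover have "is_arg_max (sum p) (\<lambda>U. U \<subseteq> N - {i} \<and> sum w U \<le> t) T"
    using T i \<open>T \<subseteq> N\<close> by (auto simp: is_arg_max_def)
  ultimately have "loser_gap_event p (N - {i}) i t e w"
    using S unfolding loser_gap_event_def by blast
  then show ?thesis using i Y by blast
qed

text \<open>The winner and loser do not involve the weight of item \<open>i\<close>, so only the term \<open>w i\<close>
  of the loser weight varies along the \<open>i\<close>-th coordinate.\<close>
lemma loser_gap_event_section:
  assumes "i \<notin> I"
  shows "\<exists>c. \<forall>y. loser_gap_event p I i t e (x(i := y)) \<longrightarrow> y \<in> {c<..c + e}"
proof (cases "\<exists>y. loser_gap_event p I i t e (x(i := y))")
  case False
  then show ?thesis by blast
next
  case True
  have sum_upd: "sum (x(i := y)) U = sum x U" if "U \<subseteq> I" for U y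
    using that assms by (intro sum.cong) auto
  have event_upd: "loser_gap_event p I i t e (x(i := y)) \<longleftrightarrow> (\<exists>T S.
      is_arg_max (sum p) (\<lambda>U. U \<subseteq> I \<and> sum x U \<le> t) T \<and>
      is_arg_min (sum x) (\<lambda>U. U \<subseteq> I \<and> sum p T - p i < sum p U) S \<and>
      t < sum x S + y \<and> sum x S + y \<le> t + e)" for y
    using assms unfolding loser_gap_event_def is_arg_max_linorder is_arg_min_linorder
    by (simp add: sum_upd fun_upd_same cong: conj_cong del: fun_upd_apply)
  from True obtain T0 S0 where
    T0: "is_arg_max (sum p) (\<lambda>U. U \<subseteq> I \<and> sum x U \<le> t) T0" and
    S0: "is_arg_min (sum x) (\<lambda>U. U \<subseteq> I \<and> sum p T0 - p i < sum p U) S0"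
    unfolding event_upd by blast
  show ?thesis
  proof (intro exI allI impI)
    fix y assume "loser_gap_event p I i t e (x(i := y))"
    then obtain T S where
      T: "is_arg_max (sum p) (\<lambda>U. U \<subseteq> I \<and> sum x U \<le> t) T" and
      S: "is_arg_min (sum x) (\<lambda>U. U \<subseteq> I \<and> sum p T - p i < sum p U) S" and
      gap: "t < sum x S + y" "sum x S + y \<le> t + e"
      unfolding event_upd by blast
    have "sum p T = sum p T0"
      using T T0 by (rule is_arg_max_eq_value)
    then have "sum x S = sum x S0"
      using S S0 is_arg_min_eq_value by metis
    then show "y \<in> {t - sum x S0<..t - sum x S0 + e}"
      using gap by simp
  qed
qed

lemma eventually_separated:
  fixes X :: "real set"
  assumes "finite X"
  shows "\<forall>\<^sub>F m in sequentially. \<forall>x\<in>X. \<forall>x'\<in>X. x \<noteq> x' \<longrightarrow> 1 / real m < \<bar>x - x'\<bar>"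
proof -
  have "\<forall>\<^sub>F m in sequentially. 1 / real m < \<bar>x - x'\<bar>" if "x \<noteq> x'" for x x' :: real
    using that by (intro order_tendstoD(2)[OF lim_1_over_n]) simp
  then show ?thesis
    using assms by (auto intro!: eventually_ball_finite)
qed

text \<open>The cells are open on the left, so the point \<open>0\<close> lies in none of them.\<close>
lemma card_le_Suc_occupied_cells:
  fixes X :: "real set" and m L :: nat
  assumes "finite X" "X \<subseteq> {0..real L}" "0 < m"
    and separated: "\<forall>x\<in>X. \<forall>x'\<in>X. x \<noteq> x' \<longrightarrow> 1 / real m < \<bar>x - x'\<bar>"
  shows "card X \<le> Suc (card {j. j < L * m \<and> (\<exists>x\<in>X. real j / m < x \<and> x \<le> real j / m + 1 / m)})"
proof -
  define cell where "cell x = nat (\<lceil>real m * x\<rceil> - 1)" for x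
  have cell: "cell x < L * m \<and> real (cell x) / m < x \<and> x \<le> real (cell x) / m + 1 / m"
    if "x \<in> X - {0}" for x
  proof -
    have "0 < x" "x \<le> real L" using that assms(2) by force+
    then have "1 \<le> \<lceil>real m * x\<rceil>" "\<lceil>real m * x\<rceil> \<le> int (L * m)"
      using \<open>0 < m\<close> by (auto simp: ceiling_le_iff mult.commute)
    then have "cell x < L * m" by (simp add: cell_def nat_less_iff)
    moreover have "real (cell x) = real_of_int \<lceil>real m * x\<rceil> - 1"
      using \<open>1 \<le> \<lceil>real m * x\<rceil>\<close> by (simp add: cell_def)
    then have "real (cell x) < real m * x" "real m * x \<le> real (cell x) + 1"
      by linarith+
    ultimately show ?thesis
      using \<open>0 < m\<close> by (simp add: divide_less_eq le_divide_eq add_divide_distrib[symmetric] mult.commute)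
  qed
  have "inj_on cell (X - {0})"
  proof (rule inj_onI)
    fix x x' assume "x \<in> X - {0}" "x' \<in> X - {0}" "cell x = cell x'"
    then have "real (cell x) / m < x" "x \<le> real (cell x) / m + 1 / m"
      "real (cell x) / m < x'" "x' \<le> real (cell x) / m + 1 / m"
      using cell[of x] cell[of x'] by simp_all
    then have "\<bar>x - x'\<bar> < 1 / real m" by (simp add: abs_less_iff)
    then show "x = x'" using separated \<open>x \<in> X - {0}\<close> \<open>x' \<in> X - {0}\<close> by fastforce
  qed
  then have "card (X - {0}) \<le> card {j. j < L * m \<and> (\<exists>x\<in>X. real j / m < x \<and> x \<le> real j / m + 1 / m)}"
    using cell by (intro card_inj_on_le) auto
  moreover have "card X \<le> Suc (card (X - {0}))"
    by (auto simp: card_Diff_singleton_if)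
  ultimately show ?thesis by linarith
qed

definition loser_gap_count :: "(nat \<Rightarrow> real) \<Rightarrow> nat \<Rightarrow> nat \<Rightarrow> (nat \<Rightarrow> real) \<Rightarrow> nat" where
  "loser_gap_count p k m w = (\<Sum>j<k * m. \<Sum>i<k.
     of_bool (loser_gap_event p ({..<k} - {i}) i (real j / m) (1 / m) w))"

lemma eventually_card_nu_set_le:
  assumes p: "\<forall>i<k. 0 \<le> p i" and w: "\<forall>i<k. 0 \<le> w i \<and> w i \<le> 1"
  shows "\<forall>\<^sub>F m in sequentially. card (nu_set p w k) \<le> Suc (loser_gap_count p k m w)"
proof -
  let ?P = "nondominated (solution_values p w {..<k})"
  let ?X = "snd ` ?P"
  have "finite ?X"
    by (simp add: finite_nondominated finite_solution_values)
  have card_eq: "card (nu_set p w k) = card ?X"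
    by (simp add: nu_set_eq_nondominated card_image inj_on_snd_nondominated)
  have "?X \<subseteq> {0..real k}"
  proof
    fix x assume "x \<in> ?X"
    then obtain v where "v \<in> solution_values p w {..<k}" "x = snd v"
      using nondominated_subset by blast
    then show "x \<in> {0..real k}"
      using solution_values_weight_bounds[of "{..<k}" w v p] w by auto
  qed
  have occupied_le: "of_bool (\<exists>x\<in>?X. real j / m < x \<and> x \<le> real j / m + 1 / m) \<le>
      (\<Sum>i<k. of_bool (loser_gap_event p ({..<k} - {i}) i (real j / m) (1 / m) w) :: nat)" for j m :: nat
  proof (cases "\<exists>x\<in>?X. real j / m < x \<and> x \<le> real j / m + 1 / m")
    case True
    then obtain y where "y \<in> ?P" "real j / m < snd y" "snd y \<le> real j / m + 1 / m"
      by blast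
    then obtain i where "i < k" "loser_gap_event p ({..<k} - {i}) i (real j / m) (1 / m) w"
      using loser_gap_event_if_nondominated[of "{..<k}" p y w "real j / m" "1 / m"] p by auto
    then show ?thesis
      using member_le_sum[of i "{..<k}" "\<lambda>i. of_bool (loser_gap_event p ({..<k} - {i}) i (real j / m) (1 / m) w) :: nat"]
      by simp
  next
    case False
    then show ?thesis by (simp only: of_bool_eq(1))
  qed
  have bound: "card (nu_set p w k) \<le> Suc (loser_gap_count p k m w)"
    if "0 < m" and separated: "\<forall>x\<in>?X. \<forall>x'\<in>?X. x \<noteq> x' \<longrightarrow> 1 / real m < \<bar>x - x'\<bar>" for m
  proof -
    have "card {j. j < k * m \<and> (\<exists>x\<in>?X. real j / m < x \<and> x \<le> real j / m + 1 / m)} =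
        (\<Sum>j<k * m. of_bool (\<exists>x\<in>?X. real j / m < x \<and> x \<le> real j / m + 1 / m))"
      by (simp add: Int_def lessThan_def)
    also have "\<dots> \<le> loser_gap_count p k m w"
      unfolding loser_gap_count_def by (intro sum_mono occupied_le)
    finally show ?thesis
      using card_le_Suc_occupied_cells[OF \<open>finite ?X\<close> \<open>?X \<subseteq> {0..real k}\<close> that] card_eq
      by linarith
  qed
  show ?thesis
    using eventually_conj[OF eventually_gt_at_top[of 0] eventually_separated[OF \<open>finite ?X\<close>]]
    by (rule eventually_mono) (use bound in blast)
qed

lemma eventually_nu_time_le:
  assumes "\<forall>i<n. 0 \<le> p i" "\<forall>i<n. 0 \<le> w i \<and> w i \<le> 1"
  shows "\<forall>\<^sub>F m in sequentially. nu_time n p w \<le> (\<Sum>k<n. Suc (loser_gap_count p k m w))"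
proof -
  have "\<forall>\<^sub>F m in sequentially. \<forall>k\<in>{..<n}. card (nu_set p w k) \<le> Suc (loser_gap_count p k m w)"
    using assms by (intro eventually_ball_finite ballI eventually_card_nu_set_le) auto
  then show ?thesis
    unfolding nu_time_def by (rule eventually_mono) (rule sum_mono, simp)
qed

text \<open>\<open>M i\<close> is the distribution of the weight of item \<open>i\<close>; the last assumption is the
  density bound \<open>\<phi>\<close> in the integrated form needed for Fubini's theorem.\<close>
locale density_bounded_weights =
  fixes M :: "nat \<Rightarrow> real measure" and \<phi> :: real
  assumes prob_space_M: "prob_space (M i)"
    and sets_M: "sets (M i) = sets borel"
    and emeasure_interval_le: "0 \<le> e \<Longrightarrow> emeasure (M i) {c<..c + e} \<le> ennreal (e * \<phi>)"
begin

sublocale product_sigma_finite M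
  by (simp add: product_sigma_finite_def prob_space_M prob_space_imp_sigma_finite)

lemma prob_space_PiM_M: "prob_space (PiM I M)"
  by (simp add: prob_space_M prob_space_PiM)

lemma borel_measurable_PiM_component [measurable]: "(\<lambda>w. w l) \<in> borel_measurable (PiM J M)"
proof (cases "l \<in> J")
  case True
  then show ?thesis
    using measurable_component_singleton[of l J M] by (simp add: measurable_cong_sets[OF refl sets_M])
next
  case False
  then have "w l = undefined" if "w \<in> space (PiM J M)" for w
    using that by (auto simp: space_PiM)
  then show ?thesis
    by (subst measurable_cong[where g = "\<lambda>_. undefined"]) auto
qed

lemma borel_measurable_sum_coordinates: "(\<lambda>w. sum w U) \<in> borel_measurable (PiM J M)"
  by measurable

lemma pred_loser_gap_event:
  assumes "finite I"
  shows "Measurable.pred (PiM J M) (loser_gap_event p I i t e)"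
proof -
  have event_eq: "loser_gap_event p I i t e = (\<lambda>w. \<exists>T\<in>Pow I. \<exists>S\<in>Pow I.
      sum w T \<le> t \<and> (\<forall>U\<in>Pow I. sum w U \<le> t \<longrightarrow> sum p U \<le> sum p T) \<and>
      sum p T - p i < sum p S \<and> (\<forall>U\<in>Pow I. sum p T - p i < sum p U \<longrightarrow> sum w S \<le> sum w U) \<and>
      t < sum w S + w i \<and> sum w S + w i \<le> t + e)"
    by (simp add: fun_eq_iff loser_gap_event_def is_arg_max_linorder is_arg_min_linorder conj_assoc imp_conjL Bex_def Ball_def)
  have "finite (Pow I)" using assms by simp
  note finite_quantifiers = pred_intros_finite(3,4)[OF this]
  have pred_le: "Measurable.pred (PiM J M) (\<lambda>w. f w \<le> g w)"
    if "f \<in> borel_measurable (PiM J M)" "g \<in> borel_measurable (PiM J M)" for f g :: "_ \<Rightarrow> real"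
    using that unfolding Measurable.pred_def by (rule borel_measurable_le)
  show ?thesis
    unfolding event_eq
    by (intro finite_quantifiers pred_intros_logic(3,4) pred_le borel_measurable_pred_less
        borel_measurable_add borel_measurable_sum_coordinates borel_measurable_PiM_component borel_measurable_const)
qed

lemma nn_integral_of_bool_le_interval_sections:
  assumes "finite J" "i \<in> J" "Measurable.pred (PiM J M) P" "0 \<le> e"
    and sections: "\<And>x. \<exists>c. \<forall>y. P (x(i := y)) \<longrightarrow> y \<in> {c<..c + e}"
  shows "(\<integral>\<^sup>+w. of_bool (P w) \<partial>PiM J M) \<le> ennreal (e * \<phi>)"
proof -
  have J: "J = insert i (J - {i})" using assms(2) by auto
  have "(\<lambda>w. of_bool (P w) :: ennreal) \<in> borel_measurable (PiM (insert i (J - {i})) M)"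
    using measurable_compose[OF assms(3) measurable_of_bool] J by simp
  then have "(\<integral>\<^sup>+w. of_bool (P w) \<partial>PiM J M) =
      (\<integral>\<^sup>+x. \<integral>\<^sup>+y. of_bool (P (x(i := y))) \<partial>M i \<partial>PiM (J - {i}) M)"
    using product_nn_integral_insert[of "J - {i}" i] assms(1) J by simp
  also have "\<dots> \<le> (\<integral>\<^sup>+x. ennreal (e * \<phi>) \<partial>PiM (J - {i}) M)"
  proof (rule nn_integral_mono)
    fix x
    obtain c where c: "\<forall>y. P (x(i := y)) \<longrightarrow> y \<in> {c<..c + e}"
      using sections by blast
    have "(\<integral>\<^sup>+y. of_bool (P (x(i := y))) \<partial>M i) \<le> (\<integral>\<^sup>+y. indicator {c<..c + e} y \<partial>M i)"
      using c by (intro nn_integral_mono) (auto simp: indicator_def)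
    also have "\<dots> = emeasure (M i) {c<..c + e}"
      by (simp add: sets_M)
    also have "\<dots> \<le> ennreal (e * \<phi>)"
      using assms(4) by (rule emeasure_interval_le)
    finally show "(\<integral>\<^sup>+y. of_bool (P (x(i := y))) \<partial>M i) \<le> ennreal (e * \<phi>)" .
  qed
  also have "\<dots> = ennreal (e * \<phi>)"
    using prob_space.emeasure_space_1[OF prob_space_PiM_M] by simp
  finally show ?thesis .
qed

lemma borel_measurable_loser_gap_count:
  "(\<lambda>w. of_nat (loser_gap_count p k m w) :: ennreal) \<in> borel_measurable (PiM J M)"
  unfolding loser_gap_count_def of_nat_sum of_nat_of_bool
  by (intro borel_measurable_sum measurable_compose[OF pred_loser_gap_event measurable_of_bool]) simp

lemma nn_integral_loser_gap_count_le:
  assumes "0 < m" "k \<le> n"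
  shows "(\<integral>\<^sup>+w. of_nat (loser_gap_count p k m w) \<partial>PiM {..<n} M) \<le> of_nat k ^ 2 * ennreal \<phi>"
proof -
  let ?E = "\<lambda>j i w. loser_gap_event p ({..<k} - {i}) i (real j / m) (1 / m) w"
  have meas: "(\<lambda>w. of_bool (?E j i w) :: ennreal) \<in> borel_measurable (PiM {..<n} M)" for i j
    by (rule measurable_compose[OF pred_loser_gap_event measurable_of_bool]) simp
  have "(\<integral>\<^sup>+w. of_nat (loser_gap_count p k m w) \<partial>PiM {..<n} M) =
      (\<Sum>j<k * m. \<Sum>i<k. \<integral>\<^sup>+w. of_bool (?E j i w) \<partial>PiM {..<n} M)"
  proof -
    have "of_nat (loser_gap_count p k m w) = (\<Sum>j<k * m. \<Sum>i<k. of_bool (?E j i w) :: ennreal)" for w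
      by (simp add: loser_gap_count_def of_nat_sum del: sum_of_bool_eq)
    then show ?thesis
      using meas by (simp add: nn_integral_sum borel_measurable_sum del: sum_of_bool_eq)
  qed
  also have "\<dots> \<le> (\<Sum>j<k * m. \<Sum>i<k. ennreal (1 / m * \<phi>))"
  proof (intro sum_mono)
    fix i j assume "i \<in> {..<k}"
    then show "(\<integral>\<^sup>+w. of_bool (?E j i w) \<partial>PiM {..<n} M) \<le> ennreal (1 / m * \<phi>)"
      using assms(2) loser_gap_event_section[of i "{..<k} - {i}" p]
      by (intro nn_integral_of_bool_le_interval_sections pred_loser_gap_event) auto
  qed
  also have "\<dots> = of_nat k ^ 2 * ennreal \<phi>"
  proof -
    have "ennreal (1 / m * \<phi>) * of_nat m = ennreal \<phi>"
      using assms(1) by (simp add: ennreal_of_nat_eq_real_of_nat ennreal_mult''[symmetric])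
    then show ?thesis
      by (simp add: power2_eq_square mult.commute mult.left_commute)
  qed
  finally show ?thesis .
qed

lemma nn_integral_sum_loser_gap_counts_le:
  assumes "0 < m"
  shows "(\<integral>\<^sup>+w. (\<Sum>k<n. 1 + of_nat (loser_gap_count p k m w)) \<partial>PiM {..<n} M) \<le>
    (\<Sum>k<n. 1 + of_nat k ^ 2 * ennreal \<phi>)"
proof -
  have "(\<integral>\<^sup>+w. (\<Sum>k<n. 1 + of_nat (loser_gap_count p k m w)) \<partial>PiM {..<n} M) =
      (\<Sum>k<n. \<integral>\<^sup>+w. 1 + of_nat (loser_gap_count p k m w) \<partial>PiM {..<n} M)"
    by (intro nn_integral_sum borel_measurable_add borel_measurable_const
        borel_measurable_loser_gap_count)
  also have "\<dots> = (\<Sum>k<n. 1 + \<integral>\<^sup>+w. of_nat (loser_gap_count p k m w) \<partial>PiM {..<n} M)"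
    using prob_space.emeasure_space_1[OF prob_space_PiM_M]
    by (simp add: nn_integral_add borel_measurable_loser_gap_count)
  also have "\<dots> \<le> (\<Sum>k<n. 1 + of_nat k ^ 2 * ennreal \<phi>)"
    using assms by (intro sum_mono add_left_mono nn_integral_loser_gap_count_le) auto
  finally show ?thesis .
qed

lemma nn_integral_nu_time_le:
  assumes p: "\<forall>i<n. 0 \<le> p i" and support: "\<And>i. i < n \<Longrightarrow> AE x in M i. 0 \<le> x \<and> x \<le> 1"
  shows "(\<integral>\<^sup>+w. of_nat (nu_time n p w) \<partial>PiM {..<n} M) \<le> (\<Sum>k<n. 1 + of_nat k ^ 2 * ennreal \<phi>)"
proof -
  interpret product_prob_space M "{..<n}"
    by (simp add: product_prob_space_def product_prob_space_axioms_def prob_space_M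
        product_sigma_finite_axioms)
  define G where "G m w = (\<Sum>k<n. 1 + of_nat (loser_gap_count p k m w) :: ennreal)" for m w
  have "AE w in PiM {..<n} M. \<forall>l\<in>{..<n}. 0 \<le> w l \<and> w l \<le> 1"
    using support by (intro AE_finite_allI AE_component) auto
  then have "AE w in PiM {..<n} M. of_nat (nu_time n p w) \<le> liminf (\<lambda>m. G m w)"
  proof (rule AE_mp, intro AE_I2 impI Liminf_bounded)
    fix w :: "nat \<Rightarrow> real" assume "\<forall>l\<in>{..<n}. 0 \<le> w l \<and> w l \<le> 1"
    then show "\<forall>\<^sub>F m in sequentially. of_nat (nu_time n p w) \<le> G m w"
      using eventually_nu_time_le[of n p w] p unfolding G_def
      by (auto elim!: eventually_mono simp flip: of_nat_Suc of_nat_sum)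
  qed
  \<comment> \<open>The grid fine enough to separate the Pareto weights depends on \<open>w\<close>, hence the limit.\<close>
  then have "(\<integral>\<^sup>+w. of_nat (nu_time n p w) \<partial>PiM {..<n} M) \<le> (\<integral>\<^sup>+w. liminf (\<lambda>m. G m w) \<partial>PiM {..<n} M)"
    by (rule nn_integral_mono_AE)
  also have "\<dots> \<le> liminf (\<lambda>m. \<integral>\<^sup>+w. G m w \<partial>PiM {..<n} M)"
    unfolding G_def
    by (intro nn_integral_liminf borel_measurable_sum borel_measurable_add borel_measurable_const
        borel_measurable_loser_gap_count)
  also have "\<dots> \<le> (\<Sum>k<n. 1 + of_nat k ^ 2 * ennreal \<phi>)"
  proof (rule Liminf_le)
    show "\<forall>\<^sub>F m in sequentially. (\<integral>\<^sup>+w. G m w \<partial>PiM {..<n} M) \<le> (\<Sum>k<n. 1 + of_nat k ^ 2 * ennreal \<phi>)"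
      using eventually_gt_at_top[of 0] unfolding G_def
      by (rule eventually_mono) (rule nn_integral_sum_loser_gap_counts_le)
  qed simp
  finally show ?thesis .
qed
end

lemma density_bounded_weights_uniform:
  assumes "0 < \<phi>"
  shows "density_bounded_weights (\<lambda>i. uniform_measure lborel {a i .. a i + 1 / \<phi>}) \<phi>"
proof (rule density_bounded_weights.intro)
  fix i
  have len: "emeasure lborel {a i .. a i + 1 / \<phi>} = ennreal (1 / \<phi>)"
    using assms by simp
  show "prob_space (uniform_measure lborel {a i .. a i + 1 / \<phi>})"
    using assms by (intro prob_space_uniform_measure) (simp_all add: len)
  show "sets (uniform_measure lborel {a i .. a i + 1 / \<phi>}) = sets borel"
    by simp
  fix c e :: real assume "0 \<le> e"
  have "emeasure (uniform_measure lborel {a i .. a i + 1 / \<phi>}) {c<..c + e} =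
      emeasure lborel ({a i .. a i + 1 / \<phi>} \<inter> {c<..c + e}) / ennreal (1 / \<phi>)"
    by (simp add: len)
  also have "\<dots> \<le> emeasure lborel {c<..c + e} / ennreal (1 / \<phi>)"
    by (intro divide_right_mono_ennreal emeasure_mono) auto
  also have "\<dots> = ennreal (e * \<phi>)"
    using assms \<open>0 \<le> e\<close> by (simp add: divide_ennreal)
  finally show "emeasure (uniform_measure lborel {a i .. a i + 1 / \<phi>}) {c<..c + e} \<le> ennreal (e * \<phi>)" .
qed

lemma sum_one_plus_square_le:
  assumes "1 \<le> \<phi>"
  shows "(\<Sum>k<n. 1 + real k ^ 2 * \<phi>) \<le> 2 * real n ^ 3 * \<phi>"
proof -
  have "1 + real k ^ 2 * \<phi> \<le> 2 * real n ^ 2 * \<phi>" if "k < n" for k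
  proof -
    have "1 \<le> real n ^ 2"
      using that by simp
    then have "1 \<le> real n ^ 2 * \<phi>"
      using mult_mono[of 1 "real n ^ 2" 1 \<phi>] assms by simp
    moreover have "real k ^ 2 * \<phi> \<le> real n ^ 2 * \<phi>"
      using that assms by (intro mult_right_mono power_mono) auto
    ultimately show ?thesis by linarith
  qed
  then have "(\<Sum>k<n. 1 + real k ^ 2 * \<phi>) \<le> (\<Sum>k<n. 2 * real n ^ 2 * \<phi>)"
    by (intro sum_mono) auto
  also have "\<dots> = 2 * real n ^ 3 * \<phi>"
    by (simp add: power2_eq_square power3_eq_cube)
  finally show ?thesis .
qed

theorem corollary2p8:
  shows "\<exists>C::real. \<forall>(n::nat) (\<phi>::real) (p::nat \<Rightarrow> real) (a::nat \<Rightarrow> real).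
     \<phi> \<ge> 1 \<longrightarrow> (\<forall>i<n. p i \<ge> 0) \<longrightarrow> (\<forall>i<n. 0 \<le> a i \<and> a i + 1 / \<phi> \<le> 1) \<longrightarrow>
     (\<integral>\<^sup>+ w. ennreal (real (nu_time n p w))
        \<partial>(PiM {..<n} (\<lambda>i. uniform_measure lborel {a i .. a i + 1 / \<phi>})))
       \<le> ennreal (C * real n ^ 3 * \<phi>)"
proof (intro exI[of _ 2] allI impI)
  fix n :: nat and \<phi> :: real and p a :: "nat \<Rightarrow> real"
  assume \<phi>: "\<phi> \<ge> 1" and p: "\<forall>i<n. p i \<ge> 0" and a: "\<forall>i<n. 0 \<le> a i \<and> a i + 1 / \<phi> \<le> 1"
  interpret density_bounded_weights "\<lambda>i. uniform_measure lborel {a i .. a i + 1 / \<phi>}" \<phi>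
    using \<phi> by (intro density_bounded_weights_uniform) simp
  have support: "AE x in uniform_measure lborel {a i .. a i + 1 / \<phi>}. 0 \<le> x \<and> x \<le> 1" if "i < n" for i
    using a that by (intro AE_uniform_measureI AE_I2) auto
  have "(\<integral>\<^sup>+ w. ennreal (real (nu_time n p w))
      \<partial>(PiM {..<n} (\<lambda>i. uniform_measure lborel {a i .. a i + 1 / \<phi>}))) \<le>
      (\<Sum>k<n. 1 + of_nat k ^ 2 * ennreal \<phi>)"
    using nn_integral_nu_time_le[OF p support] by (simp add: ennreal_of_nat_eq_real_of_nat)
  also have "\<dots> = ennreal (\<Sum>k<n. 1 + real k ^ 2 * \<phi>)"
    using \<phi> by (simp add: sum_ennreal[symmetric] ennreal_of_nat_eq_real_of_nat ennreal_mult' ennreal_plus ennreal_power)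
  also have "\<dots> \<le> ennreal (2 * real n ^ 3 * \<phi>)"
    using \<phi> by (intro ennreal_leI sum_one_plus_square_le)
  finally show "(\<integral>\<^sup>+ w. ennreal (real (nu_time n p w))
      \<partial>(PiM {..<n} (\<lambda>i. uniform_measure lborel {a i .. a i + 1 / \<phi>}))) \<le> ennreal (2 * real n ^ 3 * \<phi>)" .
qed

end
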